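(* (1) Let $\nu=\sum_{k=1}^m\lambda_k\delta_{a_k}$ be a probability measure with $\lambda_k>0$, $\sum_k\lambda_k=1$ and $a_1<a_2<\cdots<a_m$. For any $b\in\mathbb{R}$, $b\neq0$, the measure $\delta_b\rhd\nu$ has exactly $m$ distinct atoms (and no other mass). Writing $\delta_b\rhd\nu=\sum_{k=1}^m\mu_k\delta_{b_k}$ with $b_1<\cdots<b_m$, the atoms satisfy either $b_1<a_1<b_2<a_2<\cdots<a_{m-1}<b_m<a_m$ or $a_1<b_1<a_2<b_2<\cdots<a_m<b_m$, and the weights are $\mu_i=\frac{\prod_{k=1}^m(b_i-a_k)}{b\prod_{k\neq i}(b_i-b_k)}$. (2) Moreover, if $b$ and $c$ are distinct real numbers, the $2m$ atoms appearing in $\delta_b\rhd\nu$ and $\delta_c\rhd\nu$ are all different.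
   Context: For a probability measure $\mu$ on $\mathbb{R}$, $G_\mu(z)=\int\frac{1}{z-x}d\mu(x)$ on $\mathbb{C}^+$ and $H_\mu=1/G_\mu$. The monotone convolution $\mu\rhd\nu$ is the unique probability measure with $H_{\mu\rhd\nu}=H_\mu\circ H_\nu$. In particular $H_{\delta_b\rhd\nu}=H_\nu-b$. *)

theory Defs
  imports "HOL-Probability.Probability"
begin

definition cauchy_G :: "real measure \<Rightarrow> complex \<Rightarrow> complex" where
  "cauchy_G M z = (\<integral>x. 1 / (z - complex_of_real x) \<partial>M)"

definition cauchy_H :: "real measure \<Rightarrow> complex \<Rightarrow> complex" where
  "cauchy_H M z = 1 / cauchy_G M z"

definition mono_conv :: "real measure \<Rightarrow> real measure \<Rightarrow> real measure" where
  "mono_conv \<mu> \<nu> = (THE \<rho>. prob_space \<rho> \<and> sets \<rho> = sets borel \<and>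
      (\<forall>z. 0 < Im z \<longrightarrow> cauchy_H \<rho> z = cauchy_H \<mu> (cauchy_H \<nu> z)))"

definition atoms_measure :: "(nat \<Rightarrow> real) \<Rightarrow> (nat \<Rightarrow> real) \<Rightarrow> nat \<Rightarrow> real measure" where
  "atoms_measure w x m = measure_of UNIV (sets borel)
      (\<lambda>A. \<Sum>k\<in>{1..m}. ennreal (w k) * indicator A (x k))"

definition atoms_of :: "real measure \<Rightarrow> real set" where
  "atoms_of M = {x. 0 < emeasure M {x}}"

end

theory Submission
  imports Defs "HOL-Computational_Algebra.Polynomial"
begin

text \<open>
  Write Q(z) = prod_k (z - a_k) and P(z) = sum_k lam_k prod_{j ~= k} (z - a_j), so that G_nu = P/Q and
  H of delta_b |> nu is H_nu - b = (Q - b P)/P. The values P(a_k) alternate in sign, so the monic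
  polynomial Q - b P of degree m has a root strictly between any two consecutive a_k, and one more
  above a_m if b > 0 or below a_1 if b < 0, where Q - b P has the sign of Q. Expanding P/(Q - b P) in
  partial fractions over these simple roots b_i shows that 1/(H_nu - b) is the Cauchy transform of
  sum_i mu_i delta_{b_i}, the weights mu_i being the residues: they are positive by a sign count and sum
  to the leading coefficient 1 of P. This measure is the monotone convolution because
  i y G(t + i y) tends to the mass at t as y -> 0, so the Cauchy transform determines a finitely supported
  probability measure. Finally, a common atom of delta_b |> nu and delta_c |> nu would be a common root
  of Q - b P and Q - c P, hence of P and Q, which is impossible as P(a_k) ~= 0.
\<close>

section \<open>Nodal polynomials and Lagrange interpolation\<close>

definition nodal_poly :: "('b \<Rightarrow> 'a::comm_ring_1) \<Rightarrow> 'b set \<Rightarrow> 'a poly" where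
  "nodal_poly c S = (\<Prod>j\<in>S. [:- c j, 1:])"

definition weighted_nodal_poly :: "('b \<Rightarrow> 'a::comm_ring_1) \<Rightarrow> ('b \<Rightarrow> 'a) \<Rightarrow> 'b set \<Rightarrow> 'a poly" where
  "weighted_nodal_poly w c S = (\<Sum>k\<in>S. smult (w k) (nodal_poly c (S - {k})))"

lemma poly_nodal_poly: "poly (nodal_poly c S) z = (\<Prod>j\<in>S. z - c j)"
  by (simp add: nodal_poly_def poly_prod)

lemma poly_weighted_nodal_poly:
  "poly (weighted_nodal_poly w c S) z = (\<Sum>k\<in>S. w k * (\<Prod>j\<in>S - {k}. z - c j))"
  by (simp add: weighted_nodal_poly_def poly_sum poly_nodal_poly)

lemma weighted_nodal_poly_cong:
  "(\<And>k. k \<in> S \<Longrightarrow> w k = w' k) \<Longrightarrow> weighted_nodal_poly w c S = weighted_nodal_poly w' c S"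
  unfolding weighted_nodal_poly_def by (rule sum.cong) simp_all

lemma degree_nodal_poly:
  fixes c :: "'b \<Rightarrow> 'a::idom"
  shows "finite S \<Longrightarrow> degree (nodal_poly c S) = card S"
  unfolding nodal_poly_def by (subst degree_prod_eq_sum_degree) auto

lemma coeff_nodal_poly_card:
  fixes c :: "'b \<Rightarrow> 'a::idom"
  assumes "finite S"
  shows "coeff (nodal_poly c S) (card S) = 1"
proof -
  have "coeff (nodal_poly c S) (card S) = lead_coeff (nodal_poly c S)"
    using assms by (simp add: degree_nodal_poly)
  also have "\<dots> = 1"
    by (simp add: nodal_poly_def lead_coeff_prod)
  finally show ?thesis .
qed

lemma degree_weighted_nodal_poly:
  fixes c :: "'b \<Rightarrow> 'a::idom"
  assumes "finite S"
  shows "degree (weighted_nodal_poly w c S) \<le> card S - 1"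
  unfolding weighted_nodal_poly_def
proof (rule degree_sum_le)
  fix k assume "k \<in> S"
  then show "degree (smult (w k) (nodal_poly c (S - {k}))) \<le> card S - 1"
    using assms degree_smult_le[of "w k" "nodal_poly c (S - {k})"] by (simp add: degree_nodal_poly)
qed (use assms in auto)

lemma coeff_weighted_nodal_poly:
  fixes c :: "'b \<Rightarrow> 'a::idom"
  assumes "finite S"
  shows "coeff (weighted_nodal_poly w c S) (card S - 1) = sum w S"
  unfolding weighted_nodal_poly_def coeff_sum
proof (rule sum.cong)
  fix k assume "k \<in> S"
  then show "coeff (smult (w k) (nodal_poly c (S - {k}))) (card S - 1) = w k"
    using assms coeff_nodal_poly_card[of "S - {k}" c] by simp
qed simp

lemma poly_nodal_poly_node:
  "finite S \<Longrightarrow> k \<in> S \<Longrightarrow> poly (nodal_poly c S) (c k) = 0"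
  unfolding poly_nodal_poly by (rule prod_zero) auto

lemma poly_weighted_nodal_poly_node:
  fixes c :: "'b \<Rightarrow> 'a::idom"
  assumes "finite S" "inj_on c S" "k \<in> S"
  shows "poly (weighted_nodal_poly w c S) (c k) = w k * (\<Prod>j\<in>S - {k}. c k - c j)"
proof -
  have "w i * (\<Prod>j\<in>S - {i}. c k - c j) = 0" if "i \<in> S - {k}" for i
    using that assms(1,3) by (subst prod_zero) auto
  then have "(\<Sum>i\<in>S - {k}. w i * (\<Prod>j\<in>S - {i}. c k - c j)) = 0"
    by (rule sum.neutral[rule_format])
  then show ?thesis
    using assms(1,3) by (simp add: poly_weighted_nodal_poly sum.remove)
qed

lemma lagrange_interpolation:
  fixes c :: "'b \<Rightarrow> 'a::field"
  assumes "finite S" "inj_on c S" "degree p < card S"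
  shows "p = weighted_nodal_poly (\<lambda>i. poly p (c i) / (\<Prod>k\<in>S - {i}. c i - c k)) c S"
proof (rule poly_eqI_degree)
  let ?q = "weighted_nodal_poly (\<lambda>i. poly p (c i) / (\<Prod>k\<in>S - {i}. c i - c k)) c S"
  have "card (c ` S) = card S"
    using assms(2) by (rule card_image)
  moreover have "degree ?q \<le> card S - 1"
    using assms(1) by (rule degree_weighted_nodal_poly)
  ultimately show "card (c ` S) > degree p" "card (c ` S) > degree ?q"
    using assms(3) by linarith+
  fix z assume "z \<in> c ` S"
  then obtain k where "k \<in> S" "z = c k" by blast
  moreover have "(\<Prod>j\<in>S - {k}. c k - c j) \<noteq> 0"
    using \<open>k \<in> S\<close> assms(1,2) by (auto simp: inj_on_eq_iff)
  ultimately show "poly p z = poly ?q z"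
    using assms(1,2) by (simp add: poly_weighted_nodal_poly_node)
qed

lemma nodal_poly_unique:
  fixes c :: "'b \<Rightarrow> 'a::idom"
  assumes "finite S" "inj_on c S" "degree p \<le> card S" "coeff p (card S) = 1"
    and "\<And>i. i \<in> S \<Longrightarrow> poly p (c i) = 0"
  shows "p = nodal_poly c S"
proof (rule poly_eqI_degree_lead_coeff[where n = "card S" and A = "c ` S"])
  show "coeff p (card S) = coeff (nodal_poly c S) (card S)"
    using assms by (simp add: coeff_nodal_poly_card)
  show "degree (nodal_poly c S) \<le> card S"
    using assms by (simp add: degree_nodal_poly)
  show "poly p z = poly (nodal_poly c S) z" if "z \<in> c ` S" for z
    using that assms by (auto simp add: poly_nodal_poly_node)
qed (use assms in \<open>simp_all add: card_image\<close>)

lemma sum_divide_eq_weighted_nodal_poly: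
  fixes c :: "'b \<Rightarrow> 'a::field"
  assumes "finite S" "\<And>k. k \<in> S \<Longrightarrow> z \<noteq> c k"
  shows "(\<Sum>k\<in>S. w k / (z - c k)) = poly (weighted_nodal_poly w c S) z / poly (nodal_poly c S) z"
proof -
  have "w k / (z - c k) = w k * (\<Prod>j\<in>S - {k}. z - c j) / (\<Prod>j\<in>S. z - c j)" if "k \<in> S" for k
    using that assms by (simp add: prod.remove[of S k])
  then show ?thesis
    by (simp add: sum_divide_distrib poly_nodal_poly poly_weighted_nodal_poly)
qed

lemma poly_nodal_poly_of_real:
  "poly (nodal_poly (\<lambda>j. of_real (c j) :: 'a::real_field) S) (of_real x) = of_real (poly (nodal_poly c S) x)"
  by (simp add: poly_nodal_poly)

lemma poly_weighted_nodal_poly_of_real: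
  "poly (weighted_nodal_poly (\<lambda>j. of_real (w j) :: 'a::real_field) (\<lambda>j. of_real (c j)) S) (of_real x)
     = of_real (poly (weighted_nodal_poly w c S) x)"
  by (simp add: poly_weighted_nodal_poly)

lemma inj_on_of_real_comp: "inj_on bs A \<Longrightarrow> inj_on (\<lambda>i. complex_of_real (bs i)) A"
  by (auto simp: inj_on_def)

section \<open>Signs of products over increasing sequences\<close>

lemma strict_mono_on_atLeastAtMostI:
  fixes f :: "nat \<Rightarrow> 'a::order"
  assumes "\<forall>k\<in>{l..<u}. f k < f (Suc k)"
  shows "strict_mono_on {l..u} f"
proof (rule strict_mono_onI)
  fix r s assume rs: "r \<in> {l..u}" "s \<in> {l..u}" "r < s"
  show "f r < f s"
    by (rule lift_Suc_mono_less_ivl[of "{l..<u}"]) (use assms rs in auto)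
qed

lemma neg_one_power_same_sign:
  fixes x y :: real
  assumes "0 < (-1) ^ n * x" "0 < (-1) ^ n * y"
  shows "0 < x * y"
proof -
  have "0 < ((-1) ^ n * x) * ((-1) ^ n * y)"
    by (rule mult_pos_pos[OF assms])
  also have "((-1) ^ n * x) * ((-1) ^ n * y) = ((-1) ^ n * (-1) ^ n) * (x * y)"
    by (simp only: ac_simps)
  also have "(-1::real) ^ n * (-1) ^ n = 1"
    by (induct n) auto
  finally show ?thesis
    by simp
qed

lemma neg_one_power_opposite_sign:
  fixes x y :: real
  assumes "0 < (-1) ^ Suc n * x" "0 < (-1) ^ n * y"
  shows "x * y < 0"
  using neg_one_power_same_sign[of n "- x" y] assms by simp

lemma sign_prod_count_neg:
  fixes f :: "'b \<Rightarrow> real"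
  assumes "finite S" "\<And>j. j \<in> S \<Longrightarrow> f j \<noteq> 0"
  shows "0 < (-1) ^ card {j\<in>S. f j < 0} * prod f S"
  using assms
proof (induction S rule: finite_induct)
  case (insert i S)
  have IH: "0 < (-1) ^ card {j\<in>S. f j < 0} * prod f S"
    using insert by simp
  show ?case
  proof (cases "f i < 0")
    case True
    then have "{j\<in>insert i S. f j < 0} = insert i {j\<in>S. f j < 0}" by auto
    then have "card {j\<in>insert i S. f j < 0} = Suc (card {j\<in>S. f j < 0})"
      using insert.hyps by simp
    then have eq: "(-1) ^ card {j\<in>insert i S. f j < 0} * prod f (insert i S)
                 = - f i * ((-1) ^ card {j\<in>S. f j < 0} * prod f S)"
      using insert.hyps by (simp add: algebra_simps)
    have "0 < - f i"
      using True by simp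
    then show ?thesis
      unfolding eq using IH by (rule mult_pos_pos)
  next
    case False
    then have "{j\<in>insert i S. f j < 0} = {j\<in>S. f j < 0}" by auto
    then have eq: "(-1) ^ card {j\<in>insert i S. f j < 0} * prod f (insert i S)
                 = f i * ((-1) ^ card {j\<in>S. f j < 0} * prod f S)"
      using insert.hyps by simp
    have "0 < f i"
      using False insert.prems by force
    then show ?thesis
      unfolding eq using IH by (rule mult_pos_pos)
  qed
qed simp

lemma sign_prod_diff_gap:
  fixes s :: "nat \<Rightarrow> real"
  assumes s: "strict_mono_on {1..m} s" and "j \<le> m"
    and below: "1 \<le> j \<Longrightarrow> s j < x" and above: "j < m \<Longrightarrow> x < s (Suc j)"
  shows "0 < (-1) ^ (m - j) * (\<Prod>k=1..m. x - s k)"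
proof -
  have lo: "s k < x" if "k \<in> {1..m}" "k \<le> j" for k
  proof -
    have "s k \<le> s j" "1 \<le> j"
      using that \<open>j \<le> m\<close> by (auto intro: strict_mono_on_leD[OF s])
    then show ?thesis
      using below by linarith
  qed
  have hi: "x < s k" if "k \<in> {1..m}" "j < k" for k
  proof -
    have "s (Suc j) \<le> s k" "j < m"
      using that by (auto intro: strict_mono_on_leD[OF s])
    then show ?thesis
      using above by linarith
  qed
  have neg_iff: "x - s k < 0 \<longleftrightarrow> j < k" and nonzero: "x - s k \<noteq> 0" if "k \<in> {1..m}" for k
  proof -
    have "k \<le> j \<and> s k < x \<or> j < k \<and> x < s k"
      using lo[OF that] hi[OF that] by linarith
    then show "x - s k < 0 \<longleftrightarrow> j < k" "x - s k \<noteq> 0"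
      by auto
  qed
  have "{k\<in>{1..m}. x - s k < 0} = {k\<in>{1..m}. j < k}"
    using neg_iff by blast
  also have "\<dots> = {j<..m}"
    using \<open>j \<le> m\<close> by auto
  finally have "{k\<in>{1..m}. x - s k < 0} = {j<..m}" .
  then have "card {k\<in>{1..m}. x - s k < 0} = m - j"
    by (simp only: card_greaterThanAtMost)
  moreover have "0 < (-1) ^ card {k\<in>{1..m}. x - s k < 0} * (\<Prod>k=1..m. x - s k)"
    using nonzero by (intro sign_prod_count_neg) auto
  ultimately show ?thesis
    by (simp only:)
qed

lemma sign_prod_diff_node:
  fixes s :: "nat \<Rightarrow> real"
  assumes s: "strict_mono_on {1..m} s" and i: "i \<in> {1..m}"
  shows "0 < (-1) ^ (m - i) * (\<Prod>k\<in>{1..m} - {i}. s i - s k)"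
proof -
  have up: "s i < s k" if "k \<in> {1..m}" "i < k" for k
    using that i by (intro strict_mono_onD[OF s]) auto
  have down: "s k < s i" if "k \<in> {1..m}" "k < i" for k
    using that i by (intro strict_mono_onD[OF s]) auto
  have neg_iff: "s i - s k < 0 \<longleftrightarrow> i < k" and nonzero: "s i - s k \<noteq> 0"
    if k: "k \<in> {1..m} - {i}" for k
  proof -
    have "i < k \<and> s i < s k \<or> k < i \<and> s k < s i"
      using k up[of k] down[of k] linorder_neqE_nat[of i k] by blast
    then show "s i - s k < 0 \<longleftrightarrow> i < k" "s i - s k \<noteq> 0"
      by auto
  qed
  have "{k\<in>{1..m} - {i}. s i - s k < 0} = {k\<in>{1..m} - {i}. i < k}"
    using neg_iff by blast
  also have "\<dots> = {i<..m}"
    using i by auto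
  finally have "{k\<in>{1..m} - {i}. s i - s k < 0} = {i<..m}" .
  then have "card {k\<in>{1..m} - {i}. s i - s k < 0} = m - i"
    by (simp only: card_greaterThanAtMost)
  moreover have "0 < (-1) ^ card {k\<in>{1..m} - {i}. s i - s k < 0} * (\<Prod>k\<in>{1..m} - {i}. s i - s k)"
    using nonzero by (intro sign_prod_count_neg) auto
  ultimately show ?thesis
    by (simp only:)
qed

section \<open>Finitely supported measures and their Cauchy transforms\<close>

lemma emeasure_distr_density_count_space_finite:
  assumes "finite I" "A \<in> sets borel"
  shows "emeasure (distr (density (count_space I) w) borel x) A = (\<Sum>k\<in>I. w k * indicator A (x k))"
proof -
  have "emeasure (distr (density (count_space I) w) borel x) A
          = (\<integral>\<^sup>+k. w k * indicator (x -` A \<inter> I) k \<partial>count_space I)"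
    using assms(2) by (simp add: emeasure_distr emeasure_density)
  also have "\<dots> = (\<Sum>k\<in>I. w k * indicator A (x k))"
    using assms(1) by (subst nn_integral_count_space_finite) (auto intro!: sum.cong simp: indicator_def)
  finally show ?thesis .
qed

lemma atoms_measure_eq_distr:
  "atoms_measure w x m = distr (density (count_space {1..m}) (\<lambda>k. ennreal (w k))) borel x"
  (is "_ = ?D")
proof -
  have "atoms_measure w x m = measure_of UNIV (sets borel) (emeasure ?D)"
    unfolding atoms_measure_def
    by (rule measure_of_eq)
      (auto simp: emeasure_distr_density_count_space_finite sets.sigma_sets_eq[of borel, simplified])
  also have "\<dots> = ?D"
    using measure_of_of_measure[of ?D] by simp
  finally show ?thesis .
qed

lemma sets_atoms_measure [simp]: "sets (atoms_measure w x m) = sets borel"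
  by (simp add: atoms_measure_eq_distr)

lemma space_atoms_measure [simp]: "space (atoms_measure w x m) = UNIV"
  by (simp add: atoms_measure_eq_distr)

lemma emeasure_atoms_measure:
  "A \<in> sets borel \<Longrightarrow> emeasure (atoms_measure w x m) A = (\<Sum>k\<in>{1..m}. ennreal (w k) * indicator A (x k))"
  by (simp add: atoms_measure_eq_distr emeasure_distr_density_count_space_finite)

lemma emeasure_atoms_measure_outside: "emeasure (atoms_measure w x m) (- x ` {1..m}) = 0"
proof -
  have "- x ` {1..m} \<in> sets borel"
    by (intro borel_open open_Compl finite_imp_closed) simp
  then show ?thesis
    by (subst emeasure_atoms_measure) auto
qed

lemma atoms_of_atoms_measure_subset: "atoms_of (atoms_measure w x m) \<subseteq> x ` {1..m}"
proof
  fix y assume "y \<in> atoms_of (atoms_measure w x m)"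
  then have "emeasure (atoms_measure w x m) {y} \<noteq> 0"
    by (simp add: atoms_of_def)
  then show "y \<in> x ` {1..m}"
    by (subst (asm) emeasure_atoms_measure) (auto simp: indicator_def split: if_splits)
qed

lemma prob_space_atoms_measure:
  assumes "\<And>k. k \<in> {1..m} \<Longrightarrow> 0 \<le> w k" "(\<Sum>k=1..m. w k) = 1"
  shows "prob_space (atoms_measure w x m)"
proof
  have "emeasure (atoms_measure w x m) (space (atoms_measure w x m)) = (\<Sum>k\<in>{1..m}. ennreal (w k))"
    by (simp add: emeasure_atoms_measure)
  also have "\<dots> = ennreal (\<Sum>k=1..m. w k)"
    using assms(1) by (rule sum_ennreal)
  also have "\<dots> = 1"
    using assms(2) by simp
  finally show "emeasure (atoms_measure w x m) (space (atoms_measure w x m)) = 1" .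
qed

lemma measure_atoms_measure_support:
  assumes "\<And>k. k \<in> {1..m} \<Longrightarrow> 0 \<le> w k" "(\<Sum>k=1..m. w k) = 1"
  shows "measure (atoms_measure w x m) (x ` {1..m}) = 1"
proof -
  interpret prob_space "atoms_measure w x m"
    using assms by (rule prob_space_atoms_measure)
  have "x ` {1..m} \<in> sets (atoms_measure w x m)"
    by (simp add: borel_closed finite_imp_closed)
  moreover have "prob (space (atoms_measure w x m) - x ` {1..m}) = 0"
    using emeasure_atoms_measure_outside[of w x m] by (simp add: measure_def Compl_eq_Diff_UNIV)
  ultimately show ?thesis
    using prob_compl by simp
qed

lemma integral_atoms_measure:
  fixes f :: "real \<Rightarrow> 'b::{banach, second_countable_topology}"
  assumes "f \<in> borel_measurable borel" "\<And>k. k \<in> {1..m} \<Longrightarrow> 0 \<le> w k"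
  shows "(\<integral>t. f t \<partial>atoms_measure w x m) = (\<Sum>k\<in>{1..m}. w k *\<^sub>R f (x k))"
proof -
  have "(\<integral>t. f t \<partial>atoms_measure w x m)
          = (\<integral>k. f (x k) \<partial>density (count_space {1..m}) (\<lambda>k. ennreal (w k)))"
    unfolding atoms_measure_eq_distr using assms(1) by (subst integral_distr) auto
  also have "\<dots> = (\<integral>k. w k *\<^sub>R f (x k) \<partial>count_space {1..m})"
    using assms by (subst integral_density) (auto simp: AE_count_space)
  also have "\<dots> = (\<Sum>k\<in>{1..m}. w k *\<^sub>R f (x k))"
    by (simp add: lebesgue_integral_count_space_finite)
  finally show ?thesis .
qed

lemma cauchy_G_atoms_measure:
  assumes "\<And>k. k \<in> {1..m} \<Longrightarrow> 0 \<le> w k"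
  shows "cauchy_G (atoms_measure w x m) z = (\<Sum>k\<in>{1..m}. of_real (w k) / (z - of_real (x k)))"
  unfolding cauchy_G_def using assms
  by (subst integral_atoms_measure) (auto simp: scaleR_conv_of_real)

lemma cauchy_G_return: "cauchy_G (return borel b) z = 1 / (z - of_real b)"
  unfolding cauchy_G_def by (subst integral_return) auto

lemma cauchy_H_return: "cauchy_H (return borel b) z = z - of_real b"
  by (simp add: cauchy_H_def cauchy_G_return)

lemma Im_sum_divide_neg:
  fixes w x :: "'b \<Rightarrow> real"
  assumes "finite S" "S \<noteq> {}" "\<And>k. k \<in> S \<Longrightarrow> 0 < w k" "0 < Im z"
  shows "Im (\<Sum>k\<in>S. of_real (w k) / (z - of_real (x k))) < 0"
proof -
  have "Im (of_real (w k) / (z - of_real (x k))) < 0" if "k \<in> S" for k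
  proof -
    have "z - of_real (x k) \<noteq> 0"
      using assms(4) by (auto simp: complex_eq_iff)
    then have "0 < (cmod (z - of_real (x k)))\<^sup>2"
      by simp
    moreover have "Im (of_real (w k) / (z - of_real (x k))) = - (w k * Im z) / (cmod (z - of_real (x k)))\<^sup>2"
      by (simp add: Im_divide')
    ultimately show ?thesis
      using assms(3)[OF that] assms(4) by (simp add: divide_pos_pos)
  qed
  then have "0 < (\<Sum>k\<in>S. - Im (of_real (w k) / (z - of_real (x k))))"
    using assms(1,2) by (intro sum_pos) auto
  then show ?thesis
    by (simp add: Im_sum sum_negf)
qed

section \<open>Uniqueness of the monotone convolution\<close>

lemma tendsto_cauchy_G_point_mass:
  assumes "finite_measure M" "sets M = sets borel"
  shows "(\<lambda>n. \<i> * of_real (1 / Suc n) * cauchy_G M (of_real t + \<i> * of_real (1 / Suc n)))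
           \<longlonglongrightarrow> complex_of_real (measure M {t})"
proof -
  interpret finite_measure M by fact
  define y :: "nat \<Rightarrow> real" where "y n = 1 / Suc n" for n
  define s where "s n u = \<i> * of_real (y n) / (of_real t + \<i> * of_real (y n) - of_real u)" for n u
  have y_pos: "0 < y n" for n
    by (simp add: y_def)
  have [measurable]: "s n \<in> borel_measurable M" for n
    unfolding s_def measurable_cong_sets[OF assms(2) refl] by measurable
  have "(\<lambda>n. integral\<^sup>L M (s n)) \<longlonglongrightarrow> integral\<^sup>L M (\<lambda>u. complex_of_real (indicator {t} u))"
  proof (rule integral_dominated_convergence[where w="\<lambda>_. 1"])
    show "(\<lambda>u. complex_of_real (indicator {t} u)) \<in> borel_measurable M"
      unfolding measurable_cong_sets[OF assms(2) refl] by measurable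
    show "AE u in M. (\<lambda>n. s n u) \<longlonglongrightarrow> complex_of_real (indicator {t} u)"
    proof (rule AE_I2)
      fix u
      have "y \<longlonglongrightarrow> 0"
        unfolding y_def by (rule LIMSEQ_inverse_real_of_nat[simplified inverse_eq_divide])
      show "(\<lambda>n. s n u) \<longlonglongrightarrow> complex_of_real (indicator {t} u)"
      proof (cases "u = t")
        case True
        then have "s n u = 1" for n
          using y_pos[of n] by (simp add: s_def)
        then show ?thesis
          using True by simp
      next
        case False
        have "(\<lambda>n. \<i> * of_real (y n) / (of_real t + \<i> * of_real (y n) - of_real u))
                \<longlonglongrightarrow> \<i> * of_real 0 / (of_real t + \<i> * of_real 0 - of_real u)"
          using False \<open>y \<longlonglongrightarrow> 0\<close> by (intro tendsto_intros) auto
        then show ?thesis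
          using False by (simp add: s_def)
      qed
    qed
    show "AE u in M. norm (s n u) \<le> 1" for n
    proof (rule AE_I2)
      fix u
      have "norm (\<i> * of_real (y n)) = \<bar>Im (of_real t + \<i> * of_real (y n) - of_real u)\<bar>"
        using y_pos[of n] by (simp add: norm_mult)
      also have "\<dots> \<le> norm (of_real t + \<i> * of_real (y n) - of_real u)"
        by (rule abs_Im_le_cmod)
      finally show "norm (s n u) \<le> 1"
        using y_pos[of n] by (auto simp: s_def norm_divide divide_le_eq_1 complex_eq_iff)
    qed
  qed auto
  moreover have "integral\<^sup>L M (s n) = \<i> * of_real (1 / Suc n) * cauchy_G M (of_real t + \<i> * of_real (1 / Suc n))" for n
    unfolding cauchy_G_def s_def y_def by (simp add: divide_inverse)
  moreover have "integral\<^sup>L M (\<lambda>u. complex_of_real (indicator {t} u)) = complex_of_real (measure M {t})"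
    using assms(2) by (simp add: sets_eq_imp_space_eq)
  ultimately show ?thesis
    by simp
qed

lemma measure_eq_sum_singletons_if_concentrated:
  fixes M :: "'a::t1_space measure"
  assumes "prob_space M" "sets M = sets borel" "finite B" "measure M B = 1" "A \<in> sets borel"
  shows "measure M A = (\<Sum>b\<in>A \<inter> B. measure M {b})"
proof -
  interpret prob_space M by fact
  have B: "B \<in> sets M"
    unfolding assms(2) using finite_imp_closed[OF assms(3)] by (rule borel_closed)
  have A: "A \<in> sets M"
    using assms(2,5) by simp
  have "measure M (A - B) \<le> measure M (space M - B)"
    using A B sets.sets_into_space by (intro finite_measure_mono) auto
  also have "\<dots> = 0"
    using prob_compl[OF B] assms(4) by simp
  finally have "measure M (A - B) = 0"
    by (simp add: antisym)
  moreover have "measure M A = measure M (A \<inter> B) + measure M (A - B)"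
    using A B by (subst finite_measure_Diff') (auto simp: Int_commute)
  moreover have "measure M (A \<inter> B) = (\<Sum>b\<in>A \<inter> B. measure M {b})"
    using assms(2,3) by (intro finite_measure_eq_sum_singleton) auto
  ultimately show ?thesis
    by simp
qed

lemma prob_space_eqI_singletons:
  fixes M N :: "'a::t1_space measure"
  assumes M: "prob_space M" "sets M = sets borel" and N: "prob_space N" "sets N = sets borel"
    and "finite B" "measure N B = 1" and singletons: "\<And>t. measure M {t} = measure N {t}"
  shows "M = N"
proof -
  have sum_singletons: "measure L B = (\<Sum>b\<in>B. measure L {b})"
    if "prob_space L" "sets L = sets borel" for L :: "'a measure"
    using that \<open>finite B\<close> by (intro finite_measure.finite_measure_eq_sum_singleton prob_space.finite_measure) auto
  have "measure M B = 1"
    using sum_singletons[OF M] sum_singletons[OF N] \<open>measure N B = 1\<close> by (simp add: singletons)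
  show ?thesis
  proof (rule measure_eqI)
    show "sets M = sets N"
      using M(2) N(2) by simp
    fix A assume "A \<in> sets M"
    then have A: "A \<in> sets borel"
      using M(2) by simp
    have "measure M A = measure N A"
      using measure_eq_sum_singletons_if_concentrated[OF M \<open>finite B\<close> \<open>measure M B = 1\<close> A]
        measure_eq_sum_singletons_if_concentrated[OF N \<open>finite B\<close> \<open>measure N B = 1\<close> A]
      by (simp add: singletons)
    then show "emeasure M A = emeasure N A"
      using prob_space.finite_measure[OF M(1)] prob_space.finite_measure[OF N(1)]
      by (simp add: finite_measure.emeasure_eq_measure)
  qed
qed

lemma cauchy_G_determines_finitely_supported:
  fixes B :: "real set"
  assumes M: "prob_space M" "sets M = sets borel" and N: "prob_space N" "sets N = sets borel"
    and "finite B" "measure N B = 1" and G: "\<And>z. 0 < Im z \<Longrightarrow> cauchy_G M z = cauchy_G N z"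
  shows "M = N"
proof (rule prob_space_eqI_singletons[OF M N \<open>finite B\<close> \<open>measure N B = 1\<close>])
  fix t
  have "(\<lambda>n. \<i> * of_real (1 / Suc n) * cauchy_G N (of_real t + \<i> * of_real (1 / Suc n)))
          \<longlonglongrightarrow> complex_of_real (measure M {t})"
    using tendsto_cauchy_G_point_mass[OF prob_space.finite_measure[OF M(1)] M(2)] by (simp add: G)
  then have "complex_of_real (measure M {t}) = complex_of_real (measure N {t})"
    using tendsto_cauchy_G_point_mass[OF prob_space.finite_measure[OF N(1)] N(2)] by (rule LIMSEQ_unique)
  then show "measure M {t} = measure N {t}"
    by simp
qed

lemma mono_conv_eqI:
  fixes B :: "real set"
  assumes "prob_space \<rho>" "sets \<rho> = sets borel" "finite B" "measure \<rho> B = 1"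
    and "\<And>z. 0 < Im z \<Longrightarrow> cauchy_H \<rho> z = cauchy_H \<mu> (cauchy_H \<nu> z)"
  shows "mono_conv \<mu> \<nu> = \<rho>"
  unfolding mono_conv_def
proof (rule the_equality)
  fix \<rho>' assume \<rho>': "prob_space \<rho>' \<and> sets \<rho>' = sets borel \<and>
    (\<forall>z. 0 < Im z \<longrightarrow> cauchy_H \<rho>' z = cauchy_H \<mu> (cauchy_H \<nu> z))"
  have "cauchy_G \<rho>' z = cauchy_G \<rho> z" if "0 < Im z" for z
    using \<rho>' assms(5)[OF that] that by (simp add: cauchy_H_def)
  then show "\<rho>' = \<rho>"
    using \<rho>' by (intro cauchy_G_determines_finitely_supported[OF _ _ assms(1-4)]) auto
qed (use assms in auto)

lemma mono_conv_return_zero: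
  fixes B :: "real set"
  assumes "prob_space \<nu>" "sets \<nu> = sets borel" "finite B" "measure \<nu> B = 1"
  shows "mono_conv (return borel 0) \<nu> = \<nu>"
  by (rule mono_conv_eqI[OF assms]) (simp add: cauchy_H_return)

section \<open>Monotone convolution of a point mass with an atomic distribution\<close>

locale atomic_distribution =
  fixes m :: nat and lam a :: "nat \<Rightarrow> real"
  assumes m_pos: "1 \<le> m"
    and lam_pos: "\<forall>k\<in>{1..m}. 0 < lam k"
    and lam_sum: "(\<Sum>k=1..m. lam k) = 1"
    and a_step: "\<forall>k\<in>{1..<m}. a k < a (Suc k)"
begin

abbreviation Q :: "real poly" where "Q \<equiv> nodal_poly a {1..m}"
abbreviation P :: "real poly" where "P \<equiv> weighted_nodal_poly lam a {1..m}"
abbreviation Qc :: "complex poly" where "Qc \<equiv> nodal_poly (\<lambda>k. of_real (a k)) {1..m}"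
abbreviation Pc :: "complex poly" where
  "Pc \<equiv> weighted_nodal_poly (\<lambda>k. of_real (lam k)) (\<lambda>k. of_real (a k)) {1..m}"

text \<open>The numerator of H_nu - b = (Q - b P)/P.\<close>
definition H_numerator :: "real \<Rightarrow> real poly" where
  "H_numerator b = Q - smult b P"

lemma a_strict_mono: "strict_mono_on {1..m} a"
  using a_step by (rule strict_mono_on_atLeastAtMostI)

lemma lam_nonneg: "k \<in> {1..m} \<Longrightarrow> 0 \<le> lam k"
  using lam_pos by (simp add: less_imp_le)

lemma sign_P_node:
  assumes "k \<in> {1..m}"
  shows "0 < (-1) ^ (m - k) * poly P (a k)"
proof -
  have "poly P (a k) = lam k * (\<Prod>j\<in>{1..m} - {k}. a k - a j)"
    using assms strict_mono_on_imp_inj_on[OF a_strict_mono]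
    by (simp add: poly_weighted_nodal_poly_node)
  then have "(-1) ^ (m - k) * poly P (a k) = lam k * ((-1) ^ (m - k) * (\<Prod>j\<in>{1..m} - {k}. a k - a j))"
    by simp
  also have "\<dots> > 0"
    using lam_pos assms sign_prod_diff_node[OF a_strict_mono assms] by simp
  finally show ?thesis .
qed

lemma poly_H_numerator_node:
  "k \<in> {1..m} \<Longrightarrow> poly (H_numerator b) (a k) = - b * poly P (a k)"
  by (simp add: H_numerator_def poly_nodal_poly_node)

lemma H_numerator_far:
  assumes "b \<noteq> 0" and far: "\<And>k. k \<in> {1..m} \<Longrightarrow> 2 * \<bar>b\<bar> \<le> \<bar>x - a k\<bar>"
  shows "\<exists>t>0. poly (H_numerator b) x = t * poly Q x"
proof -
  have dist_pos: "0 < \<bar>x - a k\<bar>" if "k \<in> {1..m}" for k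
    using far[OF that] assms(1) by linarith
  define G where "G = (\<Sum>k\<in>{1..m}. lam k / (x - a k))"
  have "\<bar>G\<bar> \<le> (\<Sum>k\<in>{1..m}. lam k / \<bar>x - a k\<bar>)"
    unfolding G_def using sum_abs[of "\<lambda>k. lam k / (x - a k)" "{1..m}"] lam_nonneg
    by (simp add: abs_divide)
  also have "\<dots> \<le> (\<Sum>k\<in>{1..m}. lam k / (2 * \<bar>b\<bar>))"
    using far dist_pos lam_nonneg assms(1) by (intro sum_mono divide_left_mono) auto
  also have "\<dots> = 1 / (2 * \<bar>b\<bar>)"
    using lam_sum by (simp add: sum_divide_distrib[symmetric])
  finally have "\<bar>b * G\<bar> \<le> 1 / 2"
    using assms(1) by (simp add: abs_mult field_simps)
  then have t_pos: "0 < 1 - b * G"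
    by linarith
  have "poly Q x \<noteq> 0"
    using dist_pos by (simp add: poly_nodal_poly)
  moreover have "G = poly P x / poly Q x"
    unfolding G_def using dist_pos by (intro sum_divide_eq_weighted_nodal_poly) auto
  ultimately have "poly (H_numerator b) x = (1 - b * G) * poly Q x"
    by (simp add: H_numerator_def algebra_simps)
  with t_pos show ?thesis
    by blast
qed

lemma root_between_nodes:
  assumes "b \<noteq> 0" "k \<in> {1..<m}"
  shows "\<exists>r. a k < r \<and> r < a (Suc k) \<and> poly (H_numerator b) r = 0"
proof -
  define n where "n = m - Suc k"
  have "0 < (-1) ^ Suc n * poly P (a k)" "0 < (-1) ^ n * poly P (a (Suc k))"
    using sign_P_node[of k] sign_P_node[of "Suc k"] assms(2) by (simp_all add: n_def Suc_diff_Suc)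
  then have "poly P (a k) * poly P (a (Suc k)) < 0"
    by (rule neg_one_power_opposite_sign)
  moreover have "poly (H_numerator b) (a k) * poly (H_numerator b) (a (Suc k))
                  = b\<^sup>2 * (poly P (a k) * poly P (a (Suc k)))"
    using assms(2) by (simp add: poly_H_numerator_node power2_eq_square)
  ultimately have "poly (H_numerator b) (a k) * poly (H_numerator b) (a (Suc k)) < 0"
    using assms(1) by (simp add: mult_pos_neg)
  moreover have "a k < a (Suc k)"
    using a_step assms(2) by simp
  ultimately show ?thesis
    using poly_IVT by blast
qed

lemma roots_right_of_nodes:
  assumes "0 < b"
  shows "\<exists>bs. \<forall>k\<in>{1..m}. a k < bs k \<and> poly (H_numerator b) (bs k) = 0 \<and> (k < m \<longrightarrow> bs k < a (Suc k))"
proof -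
  have last_root: "\<exists>r. a m < r \<and> r < a m + 2 * b \<and> poly (H_numerator b) r = 0"
  proof (rule poly_IVT_pos)
    have "0 < poly P (a m)"
      using sign_P_node[of m] m_pos by simp
    then show "poly (H_numerator b) (a m) < 0"
      using assms m_pos by (simp add: poly_H_numerator_node)
    have "2 * \<bar>b\<bar> \<le> \<bar>a m + 2 * b - a k\<bar>" if "k \<in> {1..m}" for k
    proof -
      have "a k \<le> a m"
        using that by (intro strict_mono_on_leD[OF a_strict_mono]) auto
      then show ?thesis
        using assms by arith
    qed
    then obtain t where "0 < t" "poly (H_numerator b) (a m + 2 * b) = t * poly Q (a m + 2 * b)"
      using H_numerator_far[of b "a m + 2 * b"] assms by blast
    moreover have "0 < poly Q (a m + 2 * b)"
      using sign_prod_diff_gap[OF a_strict_mono, of m "a m + 2 * b"] assms by (simp add: poly_nodal_poly)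
    ultimately show "0 < poly (H_numerator b) (a m + 2 * b)"
      by simp
  qed (use assms in simp)
  have "\<exists>r. a k < r \<and> poly (H_numerator b) r = 0 \<and> (k < m \<longrightarrow> r < a (Suc k))" if "k \<in> {1..m}" for k
  proof (cases "k < m")
    case True
    then show ?thesis
      using root_between_nodes[of b k] assms that by fastforce
  next
    case False
    then show ?thesis
      using last_root that by auto
  qed
  then show ?thesis
    by (rule bchoice[rule_format])
qed

lemma roots_left_of_nodes:
  assumes "b < 0"
  shows "\<exists>bs. \<forall>k\<in>{1..m}. bs k < a k \<and> poly (H_numerator b) (bs k) = 0 \<and> (1 < k \<longrightarrow> a (k - 1) < bs k)"
proof -
  have first_root: "\<exists>r. a 1 + 2 * b < r \<and> r < a 1 \<and> poly (H_numerator b) r = 0"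
  proof -
    define n where "n = m - 1"
    have sign_m: "(-1::real) ^ m = (-1) ^ Suc n"
      using m_pos by (simp add: n_def)
    have "2 * \<bar>b\<bar> \<le> \<bar>a 1 + 2 * b - a k\<bar>" if "k \<in> {1..m}" for k
    proof -
      have "a 1 \<le> a k"
        using that by (intro strict_mono_on_leD[OF a_strict_mono]) auto
      then show ?thesis
        using assms by arith
    qed
    then obtain t where "0 < t" and H_eq: "poly (H_numerator b) (a 1 + 2 * b) = t * poly Q (a 1 + 2 * b)"
      using H_numerator_far[of b "a 1 + 2 * b"] assms by blast
    have "0 < (-1) ^ m * poly Q (a 1 + 2 * b)"
      using sign_prod_diff_gap[OF a_strict_mono, of 0 "a 1 + 2 * b"] assms by (simp add: poly_nodal_poly)
    with \<open>0 < t\<close> have "0 < t * ((-1) ^ m * poly Q (a 1 + 2 * b))"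
      by (rule mult_pos_pos)
    also have "\<dots> = (-1) ^ m * poly (H_numerator b) (a 1 + 2 * b)"
      unfolding H_eq by (simp only: ac_simps)
    finally have "0 < (-1) ^ m * poly (H_numerator b) (a 1 + 2 * b)" .
    then have "0 < (-1) ^ Suc n * poly (H_numerator b) (a 1 + 2 * b)"
      by (simp only: sign_m)
    moreover have "0 < (-1) ^ n * poly (H_numerator b) (a 1)"
    proof -
      have "(-1) ^ n * poly (H_numerator b) (a 1) = - b * ((-1) ^ (m - 1) * poly P (a 1))"
        using m_pos by (simp add: poly_H_numerator_node n_def)
      then show ?thesis
        using sign_P_node[of 1] m_pos assms by (simp add: mult_neg_pos)
    qed
    ultimately have "poly (H_numerator b) (a 1 + 2 * b) * poly (H_numerator b) (a 1) < 0"
      by (rule neg_one_power_opposite_sign)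
    then show ?thesis
      using poly_IVT[of "a 1 + 2 * b" "a 1"] assms by simp
  qed
  have "\<exists>r. r < a k \<and> poly (H_numerator b) r = 0 \<and> (1 < k \<longrightarrow> a (k - 1) < r)" if "k \<in> {1..m}" for k
  proof (cases "1 < k")
    case True
    then show ?thesis
      using root_between_nodes[of b "k - 1"] assms that by fastforce
  next
    case False
    then show ?thesis
      using first_root that by auto
  qed
  then show ?thesis
    by (rule bchoice[rule_format])
qed

lemma interlacing_roots:
  assumes "b \<noteq> 0"
  obtains bs where "\<forall>k\<in>{1..<m}. bs k < bs (Suc k)" "\<forall>i\<in>{1..m}. poly (H_numerator b) (bs i) = 0"
    "(b < 0 \<and> (\<forall>k\<in>{1..m}. bs k < a k) \<and> (\<forall>k\<in>{1..<m}. a k < bs (Suc k))) \<or>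
     (0 < b \<and> (\<forall>k\<in>{1..m}. a k < bs k) \<and> (\<forall>k\<in>{1..<m}. bs k < a (Suc k)))"
proof (cases "b < 0")
  case True
  then obtain bs where bs: "\<And>k. k \<in> {1..m} \<Longrightarrow>
      bs k < a k \<and> poly (H_numerator b) (bs k) = 0 \<and> (1 < k \<longrightarrow> a (k - 1) < bs k)"
    using roots_left_of_nodes by blast
  have above: "a k < bs (Suc k)" if "k \<in> {1..<m}" for k
    using bs[of "Suc k"] that by simp
  have step: "bs k < bs (Suc k)" if "k \<in> {1..<m}" for k
    using bs[of k] above[OF that] that by simp
  show ?thesis
    by (rule that[of bs]) (use bs above step True in auto)
next
  case False
  then have "0 < b"
    using assms by simp
  then obtain bs where bs: "\<And>k. k \<in> {1..m} \<Longrightarrow>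
      a k < bs k \<and> poly (H_numerator b) (bs k) = 0 \<and> (k < m \<longrightarrow> bs k < a (Suc k))"
    using roots_right_of_nodes by blast
  have below: "bs k < a (Suc k)" if "k \<in> {1..<m}" for k
    using bs[of k] that by simp
  have step: "bs k < bs (Suc k)" if "k \<in> {1..<m}" for k
    using bs[of "Suc k"] below[OF that] that by simp
  show ?thesis
    by (rule that[of bs]) (use bs below step \<open>0 < b\<close> in auto)
qed

text \<open>The residue of P / H_numerator b at its simple root bs i.\<close>
definition atom_weight :: "(nat \<Rightarrow> real) \<Rightarrow> nat \<Rightarrow> real" where
  "atom_weight bs i = poly P (bs i) / (\<Prod>k\<in>{1..m} - {i}. bs i - bs k)"

lemma atom_weight_eq:
  assumes "poly (H_numerator b) (bs i) = 0" "b \<noteq> 0"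
  shows "atom_weight bs i = (\<Prod>k=1..m. bs i - a k) / (b * (\<Prod>k\<in>{1..m} - {i}. bs i - bs k))"
proof -
  have "(\<Prod>k=1..m. bs i - a k) = b * poly P (bs i)"
    using assms(1) by (simp add: H_numerator_def poly_nodal_poly)
  then show ?thesis
    using assms(2) by (simp add: atom_weight_def)
qed

lemma atom_weight_pos:
  assumes step: "\<forall>k\<in>{1..<m}. bs k < bs (Suc k)" and roots: "\<forall>i\<in>{1..m}. poly (H_numerator b) (bs i) = 0"
    and interlacing: "(b < 0 \<and> (\<forall>k\<in>{1..m}. bs k < a k) \<and> (\<forall>k\<in>{1..<m}. a k < bs (Suc k))) \<or>
     (0 < b \<and> (\<forall>k\<in>{1..m}. a k < bs k) \<and> (\<forall>k\<in>{1..<m}. bs k < a (Suc k)))"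
    and i: "i \<in> {1..m}"
  shows "0 < atom_weight bs i"
proof -
  define N where "N = (\<Prod>k=1..m. bs i - a k)"
  define D where "D = (\<Prod>k\<in>{1..m} - {i}. bs i - bs k)"
  have "b \<noteq> 0"
    using interlacing by auto
  then have weight: "atom_weight bs i = N / D / b"
    using atom_weight_eq[of b bs i] roots i by (simp add: N_def D_def mult.commute)
  have D_sign: "0 < (-1) ^ (m - i) * D"
    unfolding D_def using strict_mono_on_atLeastAtMostI[OF step] i by (rule sign_prod_diff_node)
  from interlacing show ?thesis
  proof (elim disjE conjE)
    assume "b < 0" and below: "\<forall>k\<in>{1..m}. bs k < a k" and above: "\<forall>k\<in>{1..<m}. a k < bs (Suc k)"
    have "0 < (-1) ^ (m - (i - 1)) * N"
      unfolding N_def using i below above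
      by (intro sign_prod_diff_gap[OF a_strict_mono]) (auto elim!: ballE[of _ _ "i - 1"])
    then have "0 < (-1) ^ Suc (m - i) * N"
      using i by (simp add: Suc_diff_le)
    then have "N * D < 0"
      using D_sign by (rule neg_one_power_opposite_sign)
    then have "N / D < 0"
      by (simp add: divide_less_0_iff mult_less_0_iff)
    then show ?thesis
      unfolding weight using \<open>b < 0\<close> by (rule divide_neg_neg)
  next
    assume "0 < b" and above: "\<forall>k\<in>{1..m}. a k < bs k" and below: "\<forall>k\<in>{1..<m}. bs k < a (Suc k)"
    have "0 < (-1) ^ (m - i) * N"
      unfolding N_def using i below above by (intro sign_prod_diff_gap[OF a_strict_mono]) auto
    then have "0 < N * D"
      using D_sign by (rule neg_one_power_same_sign)
    then have "0 < N / D"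
      by (simp add: zero_less_divide_iff zero_less_mult_iff)
    then show ?thesis
      unfolding weight using \<open>0 < b\<close> by (rule divide_pos_pos)
  qed
qed

lemma degree_Pc: "degree Pc < m"
proof -
  have "degree Pc \<le> card {1..m} - 1"
    by (rule degree_weighted_nodal_poly) simp
  then show ?thesis
    using m_pos by simp
qed

lemma Qc_minus_Pc_eq_nodal_poly:
  assumes "inj_on bs {1..m}" and roots: "\<forall>i\<in>{1..m}. poly (H_numerator b) (bs i) = 0"
  shows "Qc - smult (of_real b) Pc = nodal_poly (\<lambda>i. of_real (bs i)) {1..m}"
proof -
  have "coeff Pc m = 0"
    using degree_Pc by (rule coeff_eq_0)
  show ?thesis
  proof (rule nodal_poly_unique)
    show "inj_on (\<lambda>i. complex_of_real (bs i)) {1..m}"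
      using assms(1) by (rule inj_on_of_real_comp)
    show "degree (Qc - smult (of_real b) Pc) \<le> card {1..m}"
      using degree_Pc degree_smult_le[of "of_real b" Pc]
      by (intro degree_diff_le) (simp_all add: degree_nodal_poly)
    show "coeff (Qc - smult (of_real b) Pc) (card {1..m}) = 1"
      using \<open>coeff Pc m = 0\<close> coeff_nodal_poly_card[of "{1..m}"] by simp
    fix i assume "i \<in> {1..m}"
    then show "poly (Qc - smult (of_real b) Pc) (of_real (bs i)) = 0"
      using roots by (simp add: poly_nodal_poly_of_real poly_weighted_nodal_poly_of_real H_numerator_def)
  qed simp
qed

lemma Pc_eq_interpolation:
  assumes "inj_on bs {1..m}"
  shows "Pc = weighted_nodal_poly (\<lambda>i. of_real (atom_weight bs i)) (\<lambda>i. of_real (bs i)) {1..m}"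
proof -
  have "degree Pc < card {1..m}"
    using degree_Pc by simp
  then have "Pc = weighted_nodal_poly
      (\<lambda>i. poly Pc (of_real (bs i)) / (\<Prod>k\<in>{1..m} - {i}. of_real (bs i) - of_real (bs k))) (\<lambda>i. of_real (bs i)) {1..m}"
    using inj_on_of_real_comp[OF assms] by (intro lagrange_interpolation) simp_all
  also have "\<dots> = weighted_nodal_poly (\<lambda>i. of_real (atom_weight bs i)) (\<lambda>i. of_real (bs i)) {1..m}"
    by (rule weighted_nodal_poly_cong) (simp add: atom_weight_def poly_weighted_nodal_poly_of_real)
  finally show ?thesis .
qed

lemma sum_atom_weight:
  assumes "inj_on bs {1..m}"
  shows "(\<Sum>i=1..m. atom_weight bs i) = 1"
proof -
  have "complex_of_real (\<Sum>i=1..m. atom_weight bs i) = coeff Pc (card {1..m} - 1)"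
    by (subst Pc_eq_interpolation[OF assms], subst coeff_weighted_nodal_poly) simp_all
  also have "\<dots> = complex_of_real (\<Sum>k=1..m. lam k)"
    by (subst coeff_weighted_nodal_poly) simp_all
  finally show ?thesis
    using lam_sum by (simp only: of_real_eq_iff)
qed

lemma cauchy_G_eq_Pc_div_Qc:
  assumes "0 < Im z"
  shows "cauchy_G (atoms_measure lam a m) z = poly Pc z / poly Qc z"
proof -
  have "cauchy_G (atoms_measure lam a m) z = (\<Sum>k\<in>{1..m}. of_real (lam k) / (z - of_real (a k)))"
    using lam_nonneg by (rule cauchy_G_atoms_measure)
  also have "\<dots> = poly Pc z / poly Qc z"
    using assms by (intro sum_divide_eq_weighted_nodal_poly) auto
  finally show ?thesis .
qed

lemma poly_Pc_nonzero:
  assumes "0 < Im z"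
  shows "poly Pc z \<noteq> 0"
proof
  assume "poly Pc z = 0"
  then have "cauchy_G (atoms_measure lam a m) z = 0"
    using assms by (simp add: cauchy_G_eq_Pc_div_Qc)
  moreover have "cauchy_G (atoms_measure lam a m) z = (\<Sum>k\<in>{1..m}. of_real (lam k) / (z - of_real (a k)))"
    using lam_nonneg by (rule cauchy_G_atoms_measure)
  moreover have "Im (\<Sum>k\<in>{1..m}. of_real (lam k) / (z - of_real (a k))) < 0"
    using lam_pos m_pos assms by (intro Im_sum_divide_neg) auto
  ultimately show False
    by (simp only:) simp
qed

lemma mono_conv_return_eq_atoms:
  assumes mono: "strict_mono_on {1..m} bs" and roots: "\<forall>i\<in>{1..m}. poly (H_numerator b) (bs i) = 0"
    and pos: "\<forall>i\<in>{1..m}. 0 < atom_weight bs i"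
  shows "mono_conv (return borel b) (atoms_measure lam a m) = atoms_measure (atom_weight bs) bs m"
proof (rule mono_conv_eqI)
  have inj: "inj_on bs {1..m}"
    using mono by (rule strict_mono_on_imp_inj_on)
  have nonneg: "\<And>i. i \<in> {1..m} \<Longrightarrow> 0 \<le> atom_weight bs i"
    using pos by (simp add: less_imp_le)
  show "prob_space (atoms_measure (atom_weight bs) bs m)"
    using nonneg sum_atom_weight[OF inj] by (rule prob_space_atoms_measure)
  show "measure (atoms_measure (atom_weight bs) bs m) (bs ` {1..m}) = 1"
    using nonneg sum_atom_weight[OF inj] by (rule measure_atoms_measure_support)
  fix z :: complex assume z: "0 < Im z"
  have "cauchy_G (atoms_measure (atom_weight bs) bs m) z
      = (\<Sum>i\<in>{1..m}. of_real (atom_weight bs i) / (z - of_real (bs i)))"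
    using nonneg by (rule cauchy_G_atoms_measure)
  also have "\<dots> = poly (weighted_nodal_poly (\<lambda>i. of_real (atom_weight bs i)) (\<lambda>i. of_real (bs i)) {1..m}) z
      / poly (nodal_poly (\<lambda>i. of_real (bs i)) {1..m}) z"
    using z by (intro sum_divide_eq_weighted_nodal_poly) auto
  also have "\<dots> = poly Pc z / poly (Qc - smult (of_real b) Pc) z"
    by (subst Qc_minus_Pc_eq_nodal_poly[OF inj roots], subst Pc_eq_interpolation[OF inj]) (rule refl)
  finally have "cauchy_H (atoms_measure (atom_weight bs) bs m) z = poly (Qc - smult (of_real b) Pc) z / poly Pc z"
    by (simp add: cauchy_H_def)
  also have "\<dots> = poly Qc z / poly Pc z - of_real b"
    using poly_Pc_nonzero[OF z] by (simp add: field_simps)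
  also have "\<dots> = cauchy_H (return borel b) (cauchy_H (atoms_measure lam a m) z)"
    unfolding cauchy_H_return by (simp add: cauchy_H_def cauchy_G_eq_Pc_div_Qc[OF z])
  finally show "cauchy_H (atoms_measure (atom_weight bs) bs m) z
      = cauchy_H (return borel b) (cauchy_H (atoms_measure lam a m) z)" .
qed simp_all

lemma H_numerator_root_of_atom:
  assumes "y \<in> atoms_of (mono_conv (return borel b) (atoms_measure lam a m))"
  shows "poly (H_numerator b) y = 0"
proof (cases "b = 0")
  case True
  have "mono_conv (return borel 0) (atoms_measure lam a m) = atoms_measure lam a m"
    using prob_space_atoms_measure[OF lam_nonneg lam_sum] measure_atoms_measure_support[OF lam_nonneg lam_sum]
    by (intro mono_conv_return_zero[where B = "a ` {1..m}"]) auto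
  then have "y \<in> atoms_of (atoms_measure lam a m)"
    using assms True by simp
  then obtain k where "k \<in> {1..m}" "y = a k"
    using atoms_of_atoms_measure_subset by blast
  then show ?thesis
    using True by (simp add: poly_H_numerator_node)
next
  case False
  then obtain bs where step: "\<forall>k\<in>{1..<m}. bs k < bs (Suc k)"
    and roots: "\<forall>i\<in>{1..m}. poly (H_numerator b) (bs i) = 0"
    and interlacing: "(b < 0 \<and> (\<forall>k\<in>{1..m}. bs k < a k) \<and> (\<forall>k\<in>{1..<m}. a k < bs (Suc k))) \<or>
       (0 < b \<and> (\<forall>k\<in>{1..m}. a k < bs k) \<and> (\<forall>k\<in>{1..<m}. bs k < a (Suc k)))"
    by (rule interlacing_roots)
  have "mono_conv (return borel b) (atoms_measure lam a m) = atoms_measure (atom_weight bs) bs m"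
    using strict_mono_on_atLeastAtMostI[OF step] roots atom_weight_pos[OF step roots interlacing]
    by (intro mono_conv_return_eq_atoms) auto
  then have "y \<in> atoms_of (atoms_measure (atom_weight bs) bs m)"
    using assms by simp
  then obtain i where "i \<in> {1..m}" "y = bs i"
    using atoms_of_atoms_measure_subset by blast
  then show ?thesis
    using roots by simp
qed

lemma H_numerator_no_common_root:
  assumes "b \<noteq> c" "poly (H_numerator b) y = 0" "poly (H_numerator c) y = 0"
  shows False
proof -
  have "(b - c) * poly P y = 0"
    using assms(2,3) by (simp add: H_numerator_def algebra_simps)
  then have "poly P y = 0" "poly Q y = 0"
    using assms by (simp_all add: H_numerator_def)
  then obtain k where "k \<in> {1..m}" "y = a k"
    by (auto simp: poly_nodal_poly)
  then show False
    using sign_P_node[of k] \<open>poly P y = 0\<close> by simp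
qed

lemma mono_conv_return_atomic:
  assumes "b \<noteq> 0"
  shows "\<exists>bs mu :: nat \<Rightarrow> real.
    (\<forall>k\<in>{1..<m}. bs k < bs (Suc k)) \<and> (\<forall>k\<in>{1..m}. 0 < mu k) \<and>
    mono_conv (return borel b) (atoms_measure lam a m) = atoms_measure mu bs m \<and>
    (((\<forall>k\<in>{1..m}. bs k < a k) \<and> (\<forall>k\<in>{1..<m}. a k < bs (Suc k))) \<or>
     ((\<forall>k\<in>{1..m}. a k < bs k) \<and> (\<forall>k\<in>{1..<m}. bs k < a (Suc k)))) \<and>
    (\<forall>i\<in>{1..m}. mu i = (\<Prod>k=1..m. bs i - a k) / (b * (\<Prod>k\<in>{1..m} - {i}. bs i - bs k)))"
proof -
  obtain bs where step: "\<forall>k\<in>{1..<m}. bs k < bs (Suc k)"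
    and roots: "\<forall>i\<in>{1..m}. poly (H_numerator b) (bs i) = 0"
    and interlacing: "(b < 0 \<and> (\<forall>k\<in>{1..m}. bs k < a k) \<and> (\<forall>k\<in>{1..<m}. a k < bs (Suc k))) \<or>
       (0 < b \<and> (\<forall>k\<in>{1..m}. a k < bs k) \<and> (\<forall>k\<in>{1..<m}. bs k < a (Suc k)))"
    using assms by (rule interlacing_roots)
  have pos: "\<forall>i\<in>{1..m}. 0 < atom_weight bs i"
    using atom_weight_pos[OF step roots interlacing] by blast
  have "mono_conv (return borel b) (atoms_measure lam a m) = atoms_measure (atom_weight bs) bs m"
    using strict_mono_on_atLeastAtMostI[OF step] roots pos by (rule mono_conv_return_eq_atoms)
  moreover have "\<forall>i\<in>{1..m}. atom_weight bs i
      = (\<Prod>k=1..m. bs i - a k) / (b * (\<Prod>k\<in>{1..m} - {i}. bs i - bs k))"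
    using roots atom_weight_eq assms by blast
  ultimately show ?thesis
    using step pos interlacing by blast
qed

lemma atoms_of_mono_conv_return_disjoint:
  assumes "b \<noteq> c"
  shows "atoms_of (mono_conv (return borel b) (atoms_measure lam a m)) \<inter>
    atoms_of (mono_conv (return borel c) (atoms_measure lam a m)) = {}"
  using H_numerator_root_of_atom H_numerator_no_common_root assms by blast

end

theorem theorem3p1:
  fixes m :: nat and lam a :: "nat \<Rightarrow> real"
  assumes "1 \<le> m"
    and "\<forall>k\<in>{1..m}. 0 < lam k"
    and "(\<Sum>k=1..m. lam k) = 1"
    and "\<forall>k\<in>{1..<m}. a k < a (Suc k)"
  shows "(\<forall>b::real. b \<noteq> 0 \<longrightarrow>
            (\<exists>bs mu :: nat \<Rightarrow> real.
               (\<forall>k\<in>{1..<m}. bs k < bs (Suc k)) \<and>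
               (\<forall>k\<in>{1..m}. 0 < mu k) \<and>
               mono_conv (return borel b) (atoms_measure lam a m) = atoms_measure mu bs m \<and>
               (((\<forall>k\<in>{1..m}. bs k < a k) \<and> (\<forall>k\<in>{1..<m}. a k < bs (Suc k))) \<or>
                ((\<forall>k\<in>{1..m}. a k < bs k) \<and> (\<forall>k\<in>{1..<m}. bs k < a (Suc k)))) \<and>
               (\<forall>i\<in>{1..m}. mu i = (\<Prod>k=1..m. bs i - a k) /
                                    (b * (\<Prod>k\<in>{1..m} - {i}. bs i - bs k))))) \<and>
         (\<forall>b c :: real. b \<noteq> c \<longrightarrow>
            atoms_of (mono_conv (return borel b) (atoms_measure lam a m)) \<inter>
            atoms_of (mono_conv (return borel c) (atoms_measure lam a m)) = {})"
proof -
  interpret atomic_distribution m lam a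
    using assms by unfold_locales
  show ?thesis
    by (intro conjI allI impI mono_conv_return_atomic atoms_of_mono_conv_return_disjoint)
qed

end
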